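(* For every $\nu>0$, $$\lim_{\tau\to\infty}\frac{\operatorname{tr}\big(e^{-H_{\tau,0}-\nu\mathcal N_\tau}\big)}{\operatorname{tr}\big(e^{-H_{\tau,0}}\big)}=\int e^{-\nu\mathcal N}\,d\mu.$$
   Context: $\mathfrak h=L^2(\Lambda;\mathbb C)$ with $\Lambda=\mathbb T^1$ or $\mathbb R$. $h=-\Delta+\kappa+v$ ($\kappa>0$, $v\ge0$) is a positive self-adjoint operator on $\mathfrak h$ with compact resolvent and $\operatorname{tr}h^{-1}<\infty$, with spectral decomposition $h=\sum_{k\in\mathbb N}\lambda_ku_ku_k^*$ ($\lambda_k>0$, $u_k$ orthonormal). $\mathcal F=\bigoplus_{n\ge0}\mathfrak h^{(n)}$ is the bosonic Fock space ($\mathfrak h^{(n)}$ = symmetric tensors). For $\tau>0$, $H_{\tau,0}$ is the operator on $\mathcal F$ acting on $\mathfrak h^{(n)}$ as $\frac1\tau\sum_{i=1}^nh_i$ ($h_i$ = $h$ acting in the $i$-th variable), i.e. $H_{\tau,0}=\tau^{-1}\int\int b^*(x)h(x;y)b(y)$, and $\mathcal N_\tau$ acts on $\mathfrak h^{(n)}$ as multiplication by $n/\tau$. $\mu=\bigotimes_k\mu_k$ on $\mathbb C^{\mathbb N}$ with $\mu_k(dz)=\pi^{-1}e^{-|z|^2}dz$, $\phi=\sum_k\omega_k\lambda_k^{-1/2}u_k$, and $\mathcal N=\int|\phi(x)|^2dx=\sum_k|\omega_k|^2/\lambda_k$. *)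

theory Defs
  imports "HOL-Probability.Probability"
begin

text \<open>Spectral data of the one-body operator h: eigenvalues lam k > 0 (with multiplicity),
  orthonormal eigenbasis u_k.  The bosonic Fock space over h has the orthonormal basis of
  symmetrised occupation-number states, indexed by finitely supported occupation functions
  n :: nat \<Rightarrow> nat (n k = number of particles in mode u_k).\<close>

definition occupations :: "(nat \<Rightarrow> nat) set" where
  "occupations = {n. finite {k. n k \<noteq> 0}}"

text \<open>Eigenvalue of H_{tau,0} = tau^{-1} dGamma(h) on the occupation state n.\<close>
definition H_free_eig :: "(nat \<Rightarrow> real) \<Rightarrow> real \<Rightarrow> (nat \<Rightarrow> nat) \<Rightarrow> real" where
  "H_free_eig lam \<tau> n = (\<Sum>k\<in>{k. n k \<noteq> 0}. real (n k) * lam k) / \<tau>"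

text \<open>Eigenvalue of the rescaled number operator N_tau on the occupation state n.\<close>
definition N_tau_eig :: "real \<Rightarrow> (nat \<Rightarrow> nat) \<Rightarrow> real" where
  "N_tau_eig \<tau> n = (\<Sum>k\<in>{k. n k \<noteq> 0}. real (n k)) / \<tau>"

text \<open>tr(exp(-H_{tau,0} - nu N_tau)) computed in the occupation-number eigenbasis
  (both operators are diagonal in it); nu = 0 gives tr(exp(-H_{tau,0})).\<close>
definition fock_gibbs_trace :: "(nat \<Rightarrow> real) \<Rightarrow> real \<Rightarrow> real \<Rightarrow> real" where
  "fock_gibbs_trace lam \<nu> \<tau> =
     (\<Sum>\<^sub>\<infinity>n\<in>occupations. exp (- H_free_eig lam \<tau> n - \<nu> * N_tau_eig \<tau> n))"

definition gauss_C :: "complex measure" where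
  "gauss_C = density lborel (\<lambda>z. ennreal (exp (- (cmod z)\<^sup>2) / pi))"

definition gauss_mu :: "(nat \<Rightarrow> complex) measure" where
  "gauss_mu = PiM UNIV (\<lambda>_. gauss_C)"

text \<open>Classical mass N(omega) = int |phi|^2 = sum_k |omega_k|^2 / lam_k.\<close>
definition classical_mass :: "(nat \<Rightarrow> real) \<Rightarrow> (nat \<Rightarrow> complex) \<Rightarrow> real" where
  "classical_mass lam \<omega> = (\<Sum>k. (cmod (\<omega> k))\<^sup>2 / lam k)"

end

theory Submission
  imports Defs "HOL-Real_Asymp.Real_Asymp"
begin

(*
  Both sides factorise over the modes u_k. In the occupation-number basis the Gibbs weights are
  products of geometric weights, so tr e^{-H_{tau,0} - nu N_tau} = prod_k (1 - e^{-(lam_k + nu)/tau})^{-1},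
  while the Gaussian integral of e^{-nu N} is prod_k lam_k / (lam_k + nu) (dominated convergence
  over the partial masses). The k-th factor of the ratio of traces,
  (1 - e^{-lam_k/tau}) / (1 - e^{-(lam_k + nu)/tau}), lies between lam_k / (lam_k + nu) and 1 and
  tends to lam_k / (lam_k + nu) as tau -> oo. Since sum_k (1 - lam_k / (lam_k + nu)) <= nu sum_k 1/lam_k
  is finite, Tannery's theorem lets the limit pass through the infinite product.
*)

lemma nn_integral_lborel_exp_neg_square:
  fixes s :: real
  assumes s: "s > 0"
  shows "(\<integral>\<^sup>+x. ennreal (exp (- s * x\<^sup>2)) \<partial>lborel) = ennreal (sqrt (pi / s))"
proof -
  define \<sigma> where "\<sigma> = sqrt (1 / (2 * s))"
  have \<sigma>_sq: "\<sigma>\<^sup>2 = 1 / (2 * s)"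
    using s by (simp add: \<sigma>_def)
  have density: "exp (- s * x\<^sup>2) = sqrt (pi / s) * normal_density 0 \<sigma> x" for x
  proof -
    have "2 * pi * \<sigma>\<^sup>2 = pi / s" and "- (x - 0)\<^sup>2 / (2 * \<sigma>\<^sup>2) = - s * x\<^sup>2"
      using s by (simp_all add: \<sigma>_sq)
    then show ?thesis
      using s by (simp add: normal_density_def real_sqrt_divide)
  qed
  have "(\<integral>\<^sup>+x. ennreal (exp (- s * x\<^sup>2)) \<partial>lborel)
      = ennreal (sqrt (pi / s)) * (\<integral>\<^sup>+x. ennreal (normal_density 0 \<sigma> x) \<partial>lborel)"
    unfolding density using s by (simp add: ennreal_mult' nn_integral_cmult)
  also have "(\<integral>\<^sup>+x. ennreal (normal_density 0 \<sigma> x) \<partial>lborel) = 1"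
    using s integrable_normal_density[of \<sigma> 0] integral_normal_density[of \<sigma> 0]
    by (subst nn_integral_eq_integral) (auto simp: \<sigma>_def)
  finally show ?thesis
    by simp
qed

lemma nn_integral_lborel_exp_neg_cmod_square:
  fixes s :: real
  assumes s: "s > 0"
  shows "(\<integral>\<^sup>+z. ennreal (exp (- s * (cmod z)\<^sup>2)) \<partial>(lborel :: complex measure)) = ennreal (pi / s)"
proof -
  have split: "ennreal (exp (- s * (cmod z)\<^sup>2)) = (\<Prod>b\<in>Basis. ennreal (exp (- s * (z \<bullet> b)\<^sup>2)))"
    for z :: complex
    by (simp add: Basis_complex_def inner_complex_def cmod_power2 algebra_simps
        flip: ennreal_mult exp_add)
  have "(\<integral>\<^sup>+z. ennreal (exp (- s * (cmod z)\<^sup>2)) \<partial>(lborel :: complex measure))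
      = (\<Prod>b\<in>(Basis :: complex set). \<integral>\<^sup>+x. ennreal (exp (- s * x\<^sup>2)) \<partial>lborel)"
    unfolding split by (rule nn_integral_lborel_prod) auto
  also have "\<dots> = ennreal (sqrt (pi / s)) * ennreal (sqrt (pi / s))"
    using nn_integral_lborel_exp_neg_square[OF s] by (simp add: Basis_complex_def)
  also have "\<dots> = ennreal (pi / s)"
    using s by (simp flip: ennreal_mult)
  finally show ?thesis .
qed

lemma nn_integral_gauss_C_exp:
  fixes t :: real
  assumes t: "t > -1"
  shows "(\<integral>\<^sup>+z. ennreal (exp (- t * (cmod z)\<^sup>2)) \<partial>gauss_C) = ennreal (1 / (1 + t))"
proof -
  have "(\<integral>\<^sup>+z. ennreal (exp (- t * (cmod z)\<^sup>2)) \<partial>gauss_C)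
      = (\<integral>\<^sup>+z. ennreal (1 / pi) * ennreal (exp (- (1 + t) * (cmod z)\<^sup>2)) \<partial>lborel)"
    unfolding gauss_C_def
    by (subst nn_integral_density)
       (auto simp: algebra_simps simp flip: ennreal_mult exp_add intro!: nn_integral_cong)
  also have "\<dots> = ennreal (1 / pi) * ennreal (pi / (1 + t))"
    using t nn_integral_lborel_exp_neg_cmod_square[of "1 + t"] by (simp add: nn_integral_cmult)
  also have "\<dots> = ennreal (1 / (1 + t))"
    using t by (simp flip: ennreal_mult)
  finally show ?thesis .
qed

lemma sets_gauss_C [simp, measurable_cong]: "sets gauss_C = sets borel"
  by (simp add: gauss_C_def)

lemma has_bochner_integral_gauss_C_exp:
  fixes t :: real
  assumes "t > -1"
  shows "has_bochner_integral gauss_C (\<lambda>z. exp (- t * (cmod z)\<^sup>2)) (1 / (1 + t))"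
  using assms by (intro has_bochner_integral_nn_integral nn_integral_gauss_C_exp) auto

lemma prob_space_gauss_C: "prob_space gauss_C"
  by (rule prob_spaceI) (use nn_integral_gauss_C_exp[of 0] in simp)

interpretation gauss: product_prob_space "\<lambda>_. gauss_C" "UNIV :: nat set"
  using prob_space_gauss_C
  by (simp add: product_prob_space_def product_prob_space_axioms_def product_sigma_finite_def
      prob_space_imp_sigma_finite)

lemma prob_space_gauss_mu: "prob_space gauss_mu"
  unfolding gauss_mu_def by (rule gauss.P.prob_space_axioms)

lemma integral_gauss_mu_prod:
  fixes h :: "nat \<Rightarrow> complex \<Rightarrow> real"
  assumes J: "finite J" and int: "\<And>k. k \<in> J \<Longrightarrow> integrable gauss_C (h k)"
  shows "(\<integral>\<omega>. (\<Prod>k\<in>J. h k (\<omega> k)) \<partial>gauss_mu) = (\<Prod>k\<in>J. integral\<^sup>L gauss_C (h k))"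
proof -
  have [measurable]: "h k \<in> borel_measurable gauss_C" if "k \<in> J" for k
    using int[OF that] by auto
  have "(\<Prod>k\<in>J. integral\<^sup>L gauss_C (h k)) = (\<integral>x. (\<Prod>k\<in>J. h k (x k)) \<partial>PiM J (\<lambda>_. gauss_C))"
    using J int by (intro gauss.product_integral_prod[symmetric]) auto
  also have "\<dots> = (\<integral>x. (\<Prod>k\<in>J. h k (x k)) \<partial>distr gauss_mu (PiM J (\<lambda>_. gauss_C)) (\<lambda>x. restrict x J))"
    unfolding gauss_mu_def using J by (simp add: gauss.distr_PiM_restrict_finite)
  also have "\<dots> = (\<integral>\<omega>. (\<Prod>k\<in>J. h k (\<omega> k)) \<partial>gauss_mu)"
    by (subst integral_distr) (auto simp: gauss_mu_def intro!: Bochner_Integration.integral_cong)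
  finally show ?thesis ..
qed

lemma nn_integral_gauss_mu_component:
  fixes f :: "complex \<Rightarrow> ennreal"
  assumes [measurable]: "f \<in> borel_measurable borel"
  shows "(\<integral>\<^sup>+\<omega>. f (\<omega> k) \<partial>gauss_mu) = (\<integral>\<^sup>+z. f z \<partial>gauss_C)"
proof -
  have "(\<integral>\<^sup>+z. f z \<partial>gauss_C) = (\<integral>\<^sup>+z. f z \<partial>distr gauss_mu gauss_C (\<lambda>\<omega>. \<omega> k))"
    unfolding gauss_mu_def by (subst gauss.PiM_component) auto
  also have "\<dots> = (\<integral>\<^sup>+\<omega>. f (\<omega> k) \<partial>gauss_mu)"
    by (subst nn_integral_distr) (auto simp: gauss_mu_def)
  finally show ?thesis ..
qed

lemma nn_integral_gauss_C_cmod_square_le: "(\<integral>\<^sup>+z. ennreal ((cmod z)\<^sup>2) \<partial>gauss_C) \<le> 4"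
proof -
  have "ennreal ((cmod z)\<^sup>2) \<le> ennreal 2 * ennreal (exp (- (-1/2) * (cmod z)\<^sup>2))" for z
  proof -
    have "(cmod z)\<^sup>2 \<le> 2 * exp ((cmod z)\<^sup>2 / 2)"
      using exp_ge_add_one_self[of "(cmod z)\<^sup>2 / 2"] by linarith
    from ennreal_leI[OF this] show ?thesis
      by (simp add: ennreal_mult')
  qed
  then have "(\<integral>\<^sup>+z. ennreal ((cmod z)\<^sup>2) \<partial>gauss_C)
      \<le> (\<integral>\<^sup>+z. ennreal 2 * ennreal (exp (- (-1/2) * (cmod z)\<^sup>2)) \<partial>gauss_C)"
    by (intro nn_integral_mono)
  also have "\<dots> = ennreal 2 * ennreal (1 / (1 + (-1/2)))"
    using nn_integral_gauss_C_exp[of "-1/2"] by (simp add: nn_integral_cmult)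
  also have "\<dots> = 4"
    by (simp flip: ennreal_mult)
  finally show ?thesis .
qed

lemma AE_gauss_mu_summable_mass:
  assumes lam_pos: "\<And>k. lam k > 0" and trace_class: "summable (\<lambda>k. 1 / lam k)"
  shows "AE \<omega> in gauss_mu. summable (\<lambda>k. (cmod (\<omega> k))\<^sup>2 / lam k)"
proof -
  have nonneg: "0 \<le> (cmod (\<omega> k))\<^sup>2 / lam k" for \<omega> :: "nat \<Rightarrow> complex" and k
    using lam_pos[of k] by simp
  have [measurable]: "(\<lambda>\<omega>. \<Sum>k. ennreal ((cmod (\<omega> k))\<^sup>2 / lam k)) \<in> borel_measurable gauss_mu"
    unfolding gauss_mu_def by measurable
  have moment: "(\<integral>\<^sup>+\<omega>. ennreal ((cmod (\<omega> k))\<^sup>2 / lam k) \<partial>gauss_mu) \<le> ennreal (4 / lam k)" for k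
  proof -
    have "(\<integral>\<^sup>+\<omega>. ennreal ((cmod (\<omega> k))\<^sup>2 / lam k) \<partial>gauss_mu)
        = (\<integral>\<^sup>+z. ennreal (1 / lam k) * ennreal ((cmod z)\<^sup>2) \<partial>gauss_C)"
      using lam_pos[of k]
      by (subst nn_integral_gauss_mu_component) (auto simp flip: ennreal_mult' intro!: nn_integral_cong)
    also have "\<dots> = ennreal (1 / lam k) * (\<integral>\<^sup>+z. ennreal ((cmod z)\<^sup>2) \<partial>gauss_C)"
      by (rule nn_integral_cmult) auto
    also have "\<dots> \<le> ennreal (1 / lam k) * 4"
      by (intro mult_left_mono nn_integral_gauss_C_cmod_square_le) auto
    also have "\<dots> = ennreal (4 / lam k)"
      using lam_pos[of k] ennreal_mult[of "1 / lam k" 4] by simp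
    finally show ?thesis .
  qed
  have "(\<integral>\<^sup>+\<omega>. (\<Sum>k. ennreal ((cmod (\<omega> k))\<^sup>2 / lam k)) \<partial>gauss_mu)
      = (\<Sum>k. \<integral>\<^sup>+\<omega>. ennreal ((cmod (\<omega> k))\<^sup>2 / lam k) \<partial>gauss_mu)"
    unfolding gauss_mu_def by (rule nn_integral_suminf) measurable
  also have "\<dots> \<le> (\<Sum>k. ennreal (4 / lam k))"
    by (intro suminf_le moment) auto
  also have "\<dots> = ennreal (\<Sum>k. 4 / lam k)"
    using summable_mult[OF trace_class, of 4] lam_pos by (intro suminf_ennreal2) (auto simp: less_imp_le)
  finally have "(\<integral>\<^sup>+\<omega>. (\<Sum>k. ennreal ((cmod (\<omega> k))\<^sup>2 / lam k)) \<partial>gauss_mu) \<noteq> \<infinity>"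
    by (metis ennreal_neq_top infinity_ennreal_def neq_top_trans)
  then have "AE \<omega> in gauss_mu. (\<Sum>k. ennreal ((cmod (\<omega> k))\<^sup>2 / lam k)) \<noteq> \<infinity>"
    by (intro nn_integral_PInf_AE) measurable
  then show ?thesis
    by eventually_elim (use nonneg summable_suminf_not_top in \<open>auto simp: infinity_ennreal_def\<close>)
qed

lemma borel_measurable_classical_mass [measurable]:
  "classical_mass lam \<in> borel_measurable gauss_mu"
  unfolding classical_mass_def suminf_eq_lim gauss_mu_def by measurable

lemma integral_gauss_mu_exp_partial_mass:
  assumes lam_pos: "\<And>k. lam k > 0" and \<nu>: "\<nu> \<ge> 0"
  shows "(\<integral>\<omega>. exp (- \<nu> * (\<Sum>k<m. (cmod (\<omega> k))\<^sup>2 / lam k)) \<partial>gauss_mu)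
       = (\<Prod>k<m. lam k / (lam k + \<nu>))"
proof -
  have nonneg: "0 \<le> \<nu> / lam k" for k
    using lam_pos[of k] \<nu> by simp
  have factorise: "exp (- \<nu> * (\<Sum>k<m. (cmod (\<omega> k))\<^sup>2 / lam k))
      = (\<Prod>k<m. exp (- (\<nu> / lam k) * (cmod (\<omega> k))\<^sup>2))" for \<omega> :: "nat \<Rightarrow> complex"
    by (simp add: exp_sum sum_distrib_left flip: sum_negf)
  have "(\<integral>\<omega>. exp (- \<nu> * (\<Sum>k<m. (cmod (\<omega> k))\<^sup>2 / lam k)) \<partial>gauss_mu)
      = (\<integral>\<omega>. (\<Prod>k<m. exp (- (\<nu> / lam k) * (cmod (\<omega> k))\<^sup>2)) \<partial>gauss_mu)"
    by (simp only: factorise)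
  also have "\<dots> = (\<Prod>k<m. \<integral>z. exp (- (\<nu> / lam k) * (cmod z)\<^sup>2) \<partial>gauss_C)"
    using nonneg
    by (intro integral_gauss_mu_prod integrable.intros[OF has_bochner_integral_gauss_C_exp])
       (auto intro: less_le_trans[of "-1" 0])
  also have "\<dots> = (\<Prod>k<m. lam k / (lam k + \<nu>))"
  proof (rule prod.cong[OF refl])
    fix k
    have "(\<integral>z. exp (- (\<nu> / lam k) * (cmod z)\<^sup>2) \<partial>gauss_C) = 1 / (1 + \<nu> / lam k)"
      using nonneg[of k]
      by (intro has_bochner_integral_integral_eq has_bochner_integral_gauss_C_exp) simp
    also have "\<dots> = lam k / (lam k + \<nu>)"
      using lam_pos[of k] \<nu> by (simp add: field_simps)
    finally show "(\<integral>z. exp (- (\<nu> / lam k) * (cmod z)\<^sup>2) \<partial>gauss_C) = lam k / (lam k + \<nu>)" .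
  qed
  finally show ?thesis .
qed

lemma gauss_mu_exp_mass_LIMSEQ:
  assumes lam_pos: "\<And>k. lam k > 0" and trace_class: "summable (\<lambda>k. 1 / lam k)" and \<nu>: "\<nu> \<ge> 0"
  shows "(\<lambda>m. \<Prod>k<m. lam k / (lam k + \<nu>)) \<longlonglongrightarrow> (\<integral>\<omega>. exp (- \<nu> * classical_mass lam \<omega>) \<partial>gauss_mu)"
proof -
  interpret prob_space gauss_mu
    by (rule prob_space_gauss_mu)
  have "(\<lambda>m. \<integral>\<omega>. exp (- \<nu> * (\<Sum>k<m. (cmod (\<omega> k))\<^sup>2 / lam k)) \<partial>gauss_mu)
      \<longlonglongrightarrow> (\<integral>\<omega>. exp (- \<nu> * classical_mass lam \<omega>) \<partial>gauss_mu)"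
  proof (rule integral_dominated_convergence[where w = "\<lambda>_. 1"])
    show "(\<lambda>\<omega>. exp (- \<nu> * (\<Sum>k<m. (cmod (\<omega> k))\<^sup>2 / lam k))) \<in> borel_measurable gauss_mu" for m
      unfolding gauss_mu_def by measurable
    show "AE \<omega> in gauss_mu. (\<lambda>m. exp (- \<nu> * (\<Sum>k<m. (cmod (\<omega> k))\<^sup>2 / lam k)))
        \<longlonglongrightarrow> exp (- \<nu> * classical_mass lam \<omega>)"
      using AE_gauss_mu_summable_mass[OF lam_pos trace_class]
      by eventually_elim (auto simp: classical_mass_def intro!: tendsto_intros summable_LIMSEQ)
    show "AE \<omega> in gauss_mu. norm (exp (- \<nu> * (\<Sum>k<m. (cmod (\<omega> k))\<^sup>2 / lam k))) \<le> 1" for m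
      using lam_pos \<nu> by (intro AE_I2) (simp add: less_imp_le sum_nonneg)
  qed auto
  then show ?thesis
    unfolding integral_gauss_mu_exp_partial_mass[OF lam_pos \<nu>] .
qed

lemma nonneg_has_sum_exhaustion:
  fixes f :: "'a \<Rightarrow> real"
  assumes nonneg: "\<And>x. x \<in> A \<Longrightarrow> 0 \<le> f x"
    and mono: "incseq B" and subset: "\<And>m. B m \<subseteq> A"
    and exhaust: "\<And>X. finite X \<Longrightarrow> X \<subseteq> A \<Longrightarrow> \<exists>m. X \<subseteq> B m"
    and partial: "\<And>m. (f has_sum s m) (B m)" and lim: "s \<longlonglongrightarrow> L"
  shows "(f has_sum L) A"
proof -
  have nonneg_B: "0 \<le> f x" if "x \<in> B m" for x m
    using nonneg subset that by blast
  have "incseq s"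
    unfolding incseq_def
  proof (intro allI impI)
    fix m m' :: nat
    assume "m \<le> m'"
    then show "s m \<le> s m'"
      using mono nonneg_B by (intro has_sum_mono'[OF partial partial]) (auto simp: incseq_def)
  qed
  then have s_le: "s m \<le> L" for m
    using lim by (rule incseq_le)
  have finite_le: "sum f X \<le> L" if X: "finite X" "X \<subseteq> A" for X
  proof -
    obtain m where "X \<subseteq> B m"
      using exhaust[OF X] by blast
    then have "sum f X \<le> s m"
      using X nonneg_B by (intro finite_sum_le_has_sum[OF partial]) auto
    with s_le[of m] show ?thesis
      by linarith
  qed
  have summable: "f summable_on A"
    using nonneg finite_le by (intro nonneg_bdd_above_summable_on bdd_aboveI) auto
  have "s m \<le> infsum f A" for m
    using partial subset nonneg by (intro has_sum_mono'[OF partial has_sum_infsum[OF summable]]) auto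
  then have "L \<le> infsum f A"
    using lim by (intro LIMSEQ_le_const2) auto
  moreover have "infsum f A \<le> L"
    using summable finite_le by (rule infsum_le_finite_sums)
  ultimately show ?thesis
    using summable by (metis has_sum_infsum order_antisym)
qed

lemma has_sum_prod_geometric_PiE:
  fixes q :: "'a \<Rightarrow> real"
  assumes A: "finite A" and q: "\<And>k. k \<in> A \<Longrightarrow> 0 \<le> q k \<and> q k < 1"
  shows "((\<lambda>n. \<Prod>k\<in>A. q k ^ n k) has_sum (\<Prod>k\<in>A. 1 / (1 - q k))) (PiE A (\<lambda>_. UNIV))"
proof -
  have geometric: "((\<lambda>j. q k ^ j) has_sum (1 / (1 - q k))) UNIV" if "k \<in> A" for k
    using q[OF that] by (intro sums_nonneg_imp_has_sum geometric_sums) auto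
  have "(\<lambda>j. norm (q k ^ j)) summable_on UNIV" if "k \<in> A" for k
    using has_sum_imp_summable[OF geometric[OF that]] q[OF that] by (simp add: norm_power)
  then have "infsum (\<lambda>n. \<Prod>k\<in>A. q k ^ n k) (PiE A (\<lambda>_. UNIV)) = (\<Prod>k\<in>A. infsum (\<lambda>j. q k ^ j) UNIV)"
    using A by (rule infsum_prod_PiE_abs[rotated])
  also have "\<dots> = (\<Prod>k\<in>A. 1 / (1 - q k))"
    using geometric by (intro prod.cong refl infsumI)
  finally have infsum_eq: "infsum (\<lambda>n. \<Prod>k\<in>A. q k ^ n k) (PiE A (\<lambda>_. UNIV)) = (\<Prod>k\<in>A. 1 / (1 - q k))" .
  have summable: "(\<lambda>n. \<Prod>k\<in>A. q k ^ n k) summable_on (PiE A (\<lambda>_. UNIV))"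
  proof (rule ccontr)
    assume "\<not> (\<lambda>n. \<Prod>k\<in>A. q k ^ n k) summable_on (PiE A (\<lambda>_. UNIV))"
    then have "(\<Prod>k\<in>A. 1 / (1 - q k)) = 0"
      unfolding infsum_eq[symmetric] by (rule infsum_not_exists)
    moreover have "(\<Prod>k\<in>A. 1 / (1 - q k)) > 0"
      by (intro prod_pos) (simp add: q)
    ultimately show False
      by simp
  qed
  from has_sum_infsum[OF summable] show ?thesis
    unfolding infsum_eq .
qed

definition occupations_below :: "nat \<Rightarrow> (nat \<Rightarrow> nat) set" where
  "occupations_below m = {n. \<forall>k\<ge>m. n k = 0}"

lemma occupations_below_subset: "occupations_below m \<subseteq> occupations"
proof
  fix n
  assume "n \<in> occupations_below m"
  then have "{k. n k \<noteq> 0} \<subseteq> {..<m}"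
    by (auto simp: occupations_below_def not_less[symmetric])
  then show "n \<in> occupations"
    unfolding occupations_def by (auto intro: finite_subset)
qed

lemma incseq_occupations_below: "incseq occupations_below"
  by (auto simp: incseq_def occupations_below_def)

lemma finite_subset_occupations_below:
  assumes "finite F" "F \<subseteq> occupations"
  shows "\<exists>m. F \<subseteq> occupations_below m"
proof -
  have "finite (\<Union>n\<in>F. {k. n k \<noteq> 0})"
    using assms by (auto simp: occupations_def)
  then obtain m where "(\<Union>n\<in>F. {k. n k \<noteq> 0}) \<subseteq> {..<m}"
    using finite_nat_bounded by presburger
  then have "F \<subseteq> occupations_below m"
    by (auto simp: occupations_below_def subset_iff not_less[symmetric])
  then show ?thesis ..
qed

lemma has_sum_prod_geometric_occupations_below:
  fixes q :: "nat \<Rightarrow> real"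
  assumes q: "\<And>k. 0 \<le> q k \<and> q k < 1"
  shows "((\<lambda>n. \<Prod>k<m. q k ^ n k) has_sum (\<Prod>k<m. 1 / (1 - q k))) (occupations_below m)"
proof -
  have "bij_betw (\<lambda>n. restrict n {..<m}) (occupations_below m) (PiE {..<m} (\<lambda>_. UNIV))"
  proof (rule bij_betwI[where g = "\<lambda>p k. if k < m then p k else 0"])
    show "(\<lambda>n. restrict n {..<m}) \<in> occupations_below m \<rightarrow> PiE {..<m} (\<lambda>_. UNIV)"
      by auto
    show "(\<lambda>p k. if k < m then p k else 0) \<in> PiE {..<m} (\<lambda>_. UNIV) \<rightarrow> occupations_below m"
      by (auto simp: occupations_below_def)
    show "(\<lambda>k. if k < m then restrict n {..<m} k else 0) = n" if "n \<in> occupations_below m" for n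
      using that by (auto simp: occupations_below_def fun_eq_iff not_less)
    show "restrict (\<lambda>k. if k < m then p k else 0) {..<m} = p" if "p \<in> PiE {..<m} (\<lambda>_. UNIV)" for p
      using that by (auto simp: fun_eq_iff PiE_def extensional_def)
  qed
  moreover have "((\<lambda>p. \<Prod>k<m. q k ^ p k) has_sum (\<Prod>k<m. 1 / (1 - q k))) (PiE {..<m} (\<lambda>_. UNIV))"
    using q by (intro has_sum_prod_geometric_PiE) auto
  ultimately have
    "((\<lambda>n. \<Prod>k<m. q k ^ restrict n {..<m} k) has_sum (\<Prod>k<m. 1 / (1 - q k))) (occupations_below m)"
    by (rule has_sum_reindex_bij_betw[where f = "\<lambda>p. \<Prod>k<m. q k ^ p k", THEN iffD2])
  moreover have "(\<Prod>k<m. q k ^ restrict n {..<m} k) = (\<Prod>k<m. q k ^ n k)" for n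
    by (rule prod.cong) auto
  ultimately show ?thesis
    by simp
qed

lemma gibbs_weight_occupations_below:
  assumes "n \<in> occupations_below m"
  shows "exp (- H_free_eig lam \<tau> n - c * N_tau_eig \<tau> n) = (\<Prod>k<m. exp (- ((lam k + c) / \<tau>)) ^ n k)"
proof -
  have support: "{k. n k \<noteq> 0} \<subseteq> {..<m}"
    using assms by (auto simp: occupations_below_def not_less[symmetric])
  have "H_free_eig lam \<tau> n + c * N_tau_eig \<tau> n = (\<Sum>k\<in>{k. n k \<noteq> 0}. real (n k) * ((lam k + c) / \<tau>))"
    unfolding H_free_eig_def N_tau_eig_def
    by (simp add: sum_divide_distrib sum_distrib_left algebra_simps add_divide_distrib flip: sum.distrib)
  also have "\<dots> = (\<Sum>k<m. real (n k) * ((lam k + c) / \<tau>))"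
    using support by (intro sum.mono_neutral_left) auto
  finally have "exp (- H_free_eig lam \<tau> n - c * N_tau_eig \<tau> n)
      = exp (- (\<Sum>k<m. real (n k) * ((lam k + c) / \<tau>)))"
    by (simp add: algebra_simps)
  also have "\<dots> = (\<Prod>k<m. exp (- ((lam k + c) / \<tau>)) ^ n k)"
    by (simp add: exp_sum flip: exp_of_nat_mult sum_negf)
  finally show ?thesis .
qed

lemma convergent_prod_bose_factors:
  fixes a :: "nat \<Rightarrow> real"
  assumes pos: "\<And>k. a k > 0" and summable: "summable (\<lambda>k. 1 / a k)"
  shows "convergent_prod (\<lambda>k. 1 / (1 - exp (- a k)))"
proof -
  have factor: "1 / (1 - exp (- a k)) = 1 + 1 / (exp (a k) - 1)" for k
    using pos[of k] by (simp add: exp_minus field_simps)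
  have positive: "0 < exp (a k) - 1" for k
    using pos[of k] by simp
  have bound: "norm (1 / (exp (a k) - 1)) \<le> 1 / a k" for k
  proof -
    have "a k \<le> exp (a k) - 1"
      using exp_ge_add_one_self[of "a k"] by linarith
    with pos[of k] positive[of k] show ?thesis
      by (simp add: abs_of_pos divide_left_mono)
  qed
  show ?thesis
    unfolding factor using positive summable_comparison_test'[OF summable bound]
    by (subst convergent_prod_iff_summable_real) auto
qed

lemma convergent_prod_fock_gibbs_factors:
  fixes lam :: "nat \<Rightarrow> real"
  assumes lam_pos: "\<And>k. lam k > 0" and trace_class: "summable (\<lambda>k. 1 / lam k)"
    and c: "c \<ge> 0" and \<tau>: "\<tau> > 0"
  shows "convergent_prod (\<lambda>k. 1 / (1 - exp (- ((lam k + c) / \<tau>))))"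
proof (rule convergent_prod_bose_factors[of "\<lambda>k. (lam k + c) / \<tau>"])
  show "(lam k + c) / \<tau> > 0" for k
    using lam_pos[of k] c \<tau> by simp
  have "norm (1 / ((lam k + c) / \<tau>)) \<le> \<tau> * (1 / lam k)" for k
  proof -
    have "\<tau> / (lam k + c) \<le> \<tau> / lam k"
      using lam_pos[of k] c \<tau> by (intro divide_left_mono) auto
    then show ?thesis
      using lam_pos[of k] c \<tau> by simp
  qed
  then show "summable (\<lambda>k. 1 / ((lam k + c) / \<tau>))"
    by (rule summable_comparison_test'[OF summable_mult[OF trace_class]])
qed

lemma fock_gibbs_trace_has_prod:
  assumes lam_pos: "\<And>k. lam k > 0" and trace_class: "summable (\<lambda>k. 1 / lam k)"
    and c: "c \<ge> 0" and \<tau>: "\<tau> > 0"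
  shows "(\<lambda>k. 1 / (1 - exp (- ((lam k + c) / \<tau>)))) has_prod fock_gibbs_trace lam c \<tau>"
proof -
  define q where "q k = exp (- ((lam k + c) / \<tau>))" for k
  define w where "w n = exp (- H_free_eig lam \<tau> n - c * N_tau_eig \<tau> n)" for n
  have q: "0 \<le> q k \<and> q k < 1" for k
    using lam_pos[of k] c \<tau> by (simp add: q_def)
  have "convergent_prod (\<lambda>k. 1 / (1 - q k))"
    unfolding q_def using assms by (rule convergent_prod_fock_gibbs_factors)
  then have has_prod: "(\<lambda>k. 1 / (1 - q k)) has_prod prodinf (\<lambda>k. 1 / (1 - q k))"
    by blast
  have "(w has_sum prodinf (\<lambda>k. 1 / (1 - q k))) occupations"
  proof (rule nonneg_has_sum_exhaustion[OF _ incseq_occupations_below occupations_below_subset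
        finite_subset_occupations_below])
    show "(w has_sum (\<Prod>k<m. 1 / (1 - q k))) (occupations_below m)" for m
    proof (rule has_sum_cong[THEN iffD2])
      show "w n = (\<Prod>k<m. q k ^ n k)" if "n \<in> occupations_below m" for n
        using that unfolding w_def q_def by (rule gibbs_weight_occupations_below)
    qed (rule has_sum_prod_geometric_occupations_below[OF q])
    show "(\<lambda>m. \<Prod>k<m. 1 / (1 - q k)) \<longlonglongrightarrow> prodinf (\<lambda>k. 1 / (1 - q k))"
      using has_prod by (rule has_prod_imp_tendsto')
  qed (auto simp: w_def)
  then have "fock_gibbs_trace lam c \<tau> = prodinf (\<lambda>k. 1 / (1 - q k))"
    unfolding fock_gibbs_trace_def w_def by (rule infsumI)
  with has_prod show ?thesis
    by (simp add: q_def)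
qed

lemma one_minus_exp_ratio_bounds:
  fixes a b :: real
  assumes a: "0 < a" and ab: "a \<le> b"
  shows "a / b \<le> (1 - exp (- a)) / (1 - exp (- b))" and "(1 - exp (- a)) / (1 - exp (- b)) \<le> 1"
proof -
  have b: "b > 0"
    using a ab by simp
  then have denominator: "1 - exp (- b) > 0"
    by simp
  define t where "t = a / b"
  have t: "0 \<le> t" "t \<le> 1"
    using a ab b by (auto simp: t_def)
  have "exp ((1 - t) *\<^sub>R 0 + t *\<^sub>R (- b)) \<le> (1 - t) * exp 0 + t * exp (- b)"
    using t by (intro convex_onD[OF exp_convex]) auto
  then have "exp (- a) \<le> 1 - t + t * exp (- b)"
    using b by (simp add: t_def)
  then have "b * exp (- a) \<le> b * (1 - t + t * exp (- b))"
    using b by (intro mult_left_mono) auto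
  also have "\<dots> = b - a + a * exp (- b)"
    using b by (simp add: t_def field_simps)
  finally have "a * (1 - exp (- b)) \<le> b * (1 - exp (- a))"
    by (simp add: algebra_simps)
  then show "a / b \<le> (1 - exp (- a)) / (1 - exp (- b))"
    using denominator b by (simp add: field_simps)
  show "(1 - exp (- a)) / (1 - exp (- b)) \<le> 1"
    using denominator ab by simp
qed

definition mode_ratio :: "real \<Rightarrow> real \<Rightarrow> real \<Rightarrow> real" where
  "mode_ratio l \<nu> \<tau> = (1 - exp (- (l / \<tau>))) / (1 - exp (- ((l + \<nu>) / \<tau>)))"

lemma fock_gibbs_trace_ratio_has_prod:
  assumes lam_pos: "\<And>k. lam k > 0" and trace_class: "summable (\<lambda>k. 1 / lam k)"
    and \<nu>: "\<nu> \<ge> 0" and \<tau>: "\<tau> > 0"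
  shows "(\<lambda>k. mode_ratio (lam k) \<nu> \<tau>) has_prod (fock_gibbs_trace lam \<nu> \<tau> / fock_gibbs_trace lam 0 \<tau>)"
proof -
  have "(\<lambda>k. (1 / (1 - exp (- ((lam k + \<nu>) / \<tau>)))) / (1 / (1 - exp (- ((lam k + 0) / \<tau>)))))
          has_prod (fock_gibbs_trace lam \<nu> \<tau> / fock_gibbs_trace lam 0 \<tau>)"
    using assms by (intro has_prod_divide fock_gibbs_trace_has_prod) auto
  then show ?thesis
    by (simp add: mode_ratio_def)
qed

lemma mode_ratio_bounds:
  assumes "l > 0" "\<nu> \<ge> 0" "\<tau> > 0"
  shows "l / (l + \<nu>) \<le> mode_ratio l \<nu> \<tau>" and "mode_ratio l \<nu> \<tau> \<le> 1"
proof -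
  have "0 < l / \<tau>" "l / \<tau> \<le> (l + \<nu>) / \<tau>" and "l / (l + \<nu>) = (l / \<tau>) / ((l + \<nu>) / \<tau>)"
    using assms by (simp_all add: divide_right_mono)
  then show "l / (l + \<nu>) \<le> mode_ratio l \<nu> \<tau>" and "mode_ratio l \<nu> \<tau> \<le> 1"
    unfolding mode_ratio_def using one_minus_exp_ratio_bounds by presburger+
qed

lemma tendsto_mode_ratio:
  assumes "l > 0" "\<nu> \<ge> 0"
  shows "(mode_ratio l \<nu> \<longlongrightarrow> l / (l + \<nu>)) at_top"
  using assms unfolding mode_ratio_def divide_inverse[of l] by real_asymp

lemma tannerys_theorem_prod:
  fixes f :: "nat \<Rightarrow> 'a \<Rightarrow> real" and g :: "nat \<Rightarrow> real"
  assumes bounds: "\<forall>\<^sub>F x in F. \<forall>k. g k \<le> f k x \<and> f k x \<le> 1"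
    and g_nonneg: "\<And>k. 0 \<le> g k"
    and summable: "summable (\<lambda>k. 1 - g k)"
    and lim: "\<And>k. ((\<lambda>x. f k x) \<longlongrightarrow> g k) F"
    and R: "\<forall>\<^sub>F x in F. (\<lambda>m. \<Prod>k<m. f k x) \<longlonglongrightarrow> R x"
    and I: "(\<lambda>m. \<Prod>k<m. g k) \<longlonglongrightarrow> I"
  shows "(R \<longlongrightarrow> I) F"
proof (cases "F = bot")
  case False
  define S where "S x = (\<Sum>k. f k x - g k)" for x
  have "\<forall>\<^sub>F (k, x) in at_top \<times>\<^sub>F F. norm (f k x - g k) \<le> 1 - g k"
    unfolding eventually_prod_filter
    by (intro exI[of _ "\<lambda>_. True"] exI[of _ "\<lambda>x. \<forall>k. g k \<le> f k x \<and> f k x \<le> 1"])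
       (use bounds in auto)
  then have "(S \<longlongrightarrow> (\<Sum>k. g k - g k)) F"
    unfolding S_def using False summable lim
    by (intro conjunct2[OF conjunct2[OF tannerys_theorem]] tendsto_diff tendsto_const)
  then have S: "(S \<longlongrightarrow> 0) F"
    by simp
  have "\<forall>\<^sub>F x in F. norm (R x - I) \<le> S x"
    using bounds R
  proof eventually_elim
    case (elim x)
    have f_unit: "0 \<le> f k x \<and> f k x \<le> 1" for k
      using elim g_nonneg[of k] by (meson order_trans)
    have summable_x: "summable (\<lambda>k. f k x - g k)"
      using f_unit elim by (intro summable_comparison_test'[OF summable]) (simp add: abs_of_nonneg)
    have "norm ((\<Prod>k<m. f k x) - (\<Prod>k<m. g k)) \<le> S x" for m
    proof -
      have "norm ((\<Prod>k<m. f k x) - (\<Prod>k<m. g k)) \<le> (\<Sum>k<m. norm (f k x - g k))"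
        using f_unit g_nonneg elim by (intro norm_prod_diff) (auto intro: order_trans)
      also have "\<dots> = (\<Sum>k<m. f k x - g k)"
        using elim by simp
      also have "\<dots> \<le> S x"
        unfolding S_def using elim by (intro sum_le_suminf[OF summable_x]) auto
      finally show ?thesis .
    qed
    moreover have "(\<lambda>m. norm ((\<Prod>k<m. f k x) - (\<Prod>k<m. g k))) \<longlonglongrightarrow> norm (R x - I)"
      using elim I by (intro tendsto_intros)
    ultimately show ?case
      by (intro LIMSEQ_le_const2) auto
  qed
  from Lim_null_comparison[OF this S] show ?thesis
    by (rule LIM_zero_cancel)
qed simp

theorem lemma3p4:
  fixes lam :: "nat \<Rightarrow> real" and \<nu> :: real
  assumes lam_pos: "\<And>k. lam k > 0"
    and trace_class: "summable (\<lambda>k. 1 / lam k)"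
    and nu_pos: "\<nu> > 0"
  shows "((\<lambda>\<tau>. fock_gibbs_trace lam \<nu> \<tau> / fock_gibbs_trace lam 0 \<tau>)
           \<longlongrightarrow> (\<integral>\<omega>. exp (- \<nu> * classical_mass lam \<omega>) \<partial>gauss_mu)) at_top"
proof (rule tannerys_theorem_prod[where f = "\<lambda>k. mode_ratio (lam k) \<nu>"])
  show "\<forall>\<^sub>F \<tau> in at_top. \<forall>k.
          lam k / (lam k + \<nu>) \<le> mode_ratio (lam k) \<nu> \<tau> \<and> mode_ratio (lam k) \<nu> \<tau> \<le> 1"
    using eventually_gt_at_top[of 0]
    by eventually_elim (use lam_pos nu_pos in \<open>auto intro!: mode_ratio_bounds\<close>)
  show "0 \<le> lam k / (lam k + \<nu>)" for k
    using lam_pos[of k] nu_pos by simp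
  have "norm (1 - lam k / (lam k + \<nu>)) \<le> \<nu> * (1 / lam k)" for k
    using lam_pos[of k] nu_pos by (simp add: field_simps)
  then show "summable (\<lambda>k. 1 - lam k / (lam k + \<nu>))"
    by (rule summable_comparison_test'[OF summable_mult[OF trace_class]])
  show "(mode_ratio (lam k) \<nu> \<longlongrightarrow> lam k / (lam k + \<nu>)) at_top" for k
    using lam_pos[of k] nu_pos by (intro tendsto_mode_ratio) auto
  show "\<forall>\<^sub>F \<tau> in at_top. (\<lambda>m. \<Prod>k<m. mode_ratio (lam k) \<nu> \<tau>)
          \<longlonglongrightarrow> fock_gibbs_trace lam \<nu> \<tau> / fock_gibbs_trace lam 0 \<tau>"
    using eventually_gt_at_top[of 0] by eventually_elim
      (use nu_pos in \<open>auto intro!: has_prod_imp_tendsto' fock_gibbs_trace_ratio_has_prod lam_pos trace_class\<close>)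
  show "(\<lambda>m. \<Prod>k<m. lam k / (lam k + \<nu>)) \<longlonglongrightarrow> (\<integral>\<omega>. exp (- \<nu> * classical_mass lam \<omega>) \<partial>gauss_mu)"
    using nu_pos by (intro gauss_mu_exp_mass_LIMSEQ lam_pos trace_class) simp
qed

end
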